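(* Let $M\geq 1$ and consider the bilateral cooperation model described in the context, restricted to submodular utility vectors. Then every DSIC mechanism that works for arbitrary submodular valuations (i.e. is DSIC and is evaluated over all pairs of submodular buyer and seller vectors) has competitive ratio at most $1/H_M$, where $H_M=\sum_{j=1}^M \frac1j$ is the $M$-th harmonic number.
   Context: Bilateral cooperation model: there are two agents, a buyer and a seller, and options $0,1,\dots,M$. A buyer utility vector is $b=(b_1,\dots,b_M)\in\mathbb{R}^M$ and a seller utility vector is $s=(s_1,\dots,s_M)\in\mathbb{R}^M$; by convention $b_0=s_0=0$. A vector $v=(v_1,\dots,v_M)$ (with $v_0=0$) is submodular if $v_{i+1}-v_i\leq v_i-v_{i-1}$ for every $i\in\{1,\dots,M-1\}$. Define $\mathrm{Feasible}(b,s)=\{i\in\{0,\dots,M\}: b_i\geq 0 \text{ and } s_i\geq 0\}$ and $OPT(b,s)=\max_{i\in \mathrm{Feasible}(b,s)}(b_i+s_i)$. A mechanism is a function $r$ mapping each pair of reported vectors $(b',s')$ to a probability vector $(r_0(b',s'),\dots,r_M(b',s'))$. The mechanism is DSIC if for all true vectors $b,s$ and reports $b',s'$ (all in the admissible class): $\sum_{i=1}^M r_i(b,s')\,b_i\geq \sum_{i=1}^M r_i(b',s')\,b_i$ and $\sum_{i=1}^M r_i(b',s)\,s_i\geq \sum_{i=1}^M r_i(b',s')\,s_i$. The gain is $G_r(b,s)=\sum_{i=1}^M r_i(b,s)(b_i+s_i)$ and the competitive ratio is the minimum of $G_r(b,s)/OPT(b,s)$ over admissible (here: submodular) $b,s$.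 *)

theory Defs
  imports "HOL-Analysis.Analysis" "HOL-Library.Extended_Real"
begin

text \<open>Utility vectors over options 0..M are functions nat => real; index 0 carries the
convention v 0 = 0, and entries beyond M are fixed to 0 so that they carry no information.\<close>

definition submodular_vec :: "nat \<Rightarrow> (nat \<Rightarrow> real) \<Rightarrow> bool" where
  "submodular_vec M v \<longleftrightarrow> v 0 = 0 \<and> (\<forall>i>M. v i = 0) \<and>
     (\<forall>i\<in>{1..M-1}. v (i+1) - v i \<le> v i - v (i-1))"

definition Feasible :: "nat \<Rightarrow> (nat \<Rightarrow> real) \<Rightarrow> (nat \<Rightarrow> real) \<Rightarrow> nat set" where
  "Feasible M b s = {i\<in>{0..M}. b i \<ge> 0 \<and> s i \<ge> 0}"

definition OPT :: "nat \<Rightarrow> (nat \<Rightarrow> real) \<Rightarrow> (nat \<Rightarrow> real) \<Rightarrow> real" where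
  "OPT M b s = Max ((\<lambda>i. b i + s i) ` Feasible M b s)"

type_synonym mechanism = "(nat \<Rightarrow> real) \<Rightarrow> (nat \<Rightarrow> real) \<Rightarrow> nat \<Rightarrow> real"

definition is_mechanism :: "nat \<Rightarrow> mechanism \<Rightarrow> bool" where
  "is_mechanism M r \<longleftrightarrow> (\<forall>b s. submodular_vec M b \<longrightarrow> submodular_vec M s \<longrightarrow>
      (\<forall>i\<in>{0..M}. r b s i \<ge> 0) \<and> (\<Sum>i=0..M. r b s i) = 1)"

definition DSIC :: "nat \<Rightarrow> mechanism \<Rightarrow> bool" where
  "DSIC M r \<longleftrightarrow> (\<forall>b s b' s'. submodular_vec M b \<longrightarrow> submodular_vec M s \<longrightarrow>
      submodular_vec M b' \<longrightarrow> submodular_vec M s' \<longrightarrow>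
      (\<Sum>i=1..M. r b s' i * b i) \<ge> (\<Sum>i=1..M. r b' s' i * b i) \<and>
      (\<Sum>i=1..M. r b' s i * s i) \<ge> (\<Sum>i=1..M. r b' s' i * s i))"

definition gain :: "nat \<Rightarrow> mechanism \<Rightarrow> (nat \<Rightarrow> real) \<Rightarrow> (nat \<Rightarrow> real) \<Rightarrow> real" where
  "gain M r b s = (\<Sum>i=1..M. r b s i * (b i + s i))"

text \<open>Competitive ratio: infimum (in the extended reals) of G/OPT over submodular pairs
with OPT > 0 (pairs with OPT = 0 make the ratio undefined and are excluded).\<close>
definition competitive_ratio :: "nat \<Rightarrow> mechanism \<Rightarrow> ereal" where
  "competitive_ratio M r = (INF bs \<in> {(b, s). submodular_vec M b \<and> submodular_vec M s \<and> OPT M b s > 0}.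
      ereal (gain M r (fst bs) (snd bs) / OPT M (fst bs) (snd bs)))"

end

theory Submission
  imports Defs
begin

text \<open>
  Let the seller report \<open>s\<^sub>k = k\<close> and, for \<open>j = 1..M\<close>, let the buyer \<open>b\<^sup>j\<close> have slope
  \<open>-\<epsilon>\<close>, steepened by \<open>-D\<^sub>j\<close> beyond option \<open>j\<close>, so that \<open>OPT(b\<^sup>j, s) = j\<close>.
  Write \<open>P\<^sub>j\<close> for the probability of trade and \<open>E\<^sub>j\<close> for the expected option chosen on
  \<open>(b\<^sup>j, s)\<close>. If the ratio is at least \<open>t\<close>, the gain bound on \<open>(b\<^sup>j, s)\<close> leaves almost no
  probability above \<open>j\<close>, and gives \<open>j P\<^sub>j \<ge> j t + (j P\<^sub>j - E\<^sub>j)\<close> up to \<open>\<epsilon>\<close>. Since the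
  penalties \<open>D\<^sub>j\<close> decrease very fast, the overshoot that \<open>b\<^sup>j\<close> tolerates costs \<open>b\<^sup>j\<^sup>+\<^sup>1\<close>
  almost nothing, so truthfulness of \<open>b\<^sup>j\<^sup>+\<^sup>1\<close> against reporting \<open>b\<^sup>j\<close> makes the potential
  \<open>j P\<^sub>j - E\<^sub>j\<close> grow by at least \<open>P\<^sub>j\<close> per step. Hence \<open>j P\<^sub>j \<ge> j t + \<Sum>\<^bsub>i<j\<^esub> P\<^sub>i\<close>
  up to errors, which forces \<open>P\<^sub>j \<ge> t H\<^sub>j\<close>; as \<open>P\<^sub>M \<le> 1\<close>, \<open>t \<le> 1/H\<^sub>M\<close>.
\<close>

lemma sum_harm_lessThan: "(\<Sum>i<n. harm i :: real) = real n * harm n - real n"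
proof (induction n)
  case (Suc n)
  then show ?case
    by (simp add: harm_Suc distrib_left) (simp add: algebra_simps)
qed simp

lemma sum_harm_atLeast1: "(\<Sum>i\<in>{1..<n}. harm i :: real) = real n * harm n - real n"
proof -
  have "(\<Sum>i<n. harm i :: real) = (\<Sum>i\<in>{1..<n}. harm i)"
    by (rule sum.mono_neutral_right) (auto simp: harm_def)
  then show ?thesis by (simp add: sum_harm_lessThan)
qed

lemma harm_le_of_recurrence:
  fixes a :: "nat \<Rightarrow> real"
  assumes eps: "0 \<le> eps" "eps \<le> 1" and tau: "0 \<le> tau"
    and rec: "\<And>j. 1 \<le> j \<Longrightarrow> j \<le> n \<Longrightarrow>
      real j * tau * (1 + eps * harm n) + (1 - eps) * (\<Sum>i\<in>{1..<j}. a i) \<le> real j * a j"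
    and j: "1 \<le> j" "j \<le> n"
  shows "tau * harm j \<le> a j"
  using j
proof (induction j rule: less_induct)
  case (less j)
  have "tau * (real j * harm j - real j) = (\<Sum>i\<in>{1..<j}. tau * harm i)"
    using sum_harm_atLeast1[of j] by (simp flip: sum_distrib_left)
  also have "\<dots> \<le> (\<Sum>i\<in>{1..<j}. a i)"
    using less by (intro sum_mono) auto
  finally have sum_ge: "tau * (real j * harm j - real j) \<le> (\<Sum>i\<in>{1..<j}. a i)" .
  have "harm j \<le> (harm n :: real)"
    using less by (intro harm_mono) simp
  then have "0 \<le> real j * tau * eps * (harm n - harm j + 1)"
    using eps tau by (simp add: harm_nonneg)
  then have "real j * (tau * harm j)
      \<le> real j * tau * (1 + eps * harm n) + (1 - eps) * (tau * (real j * harm j - real j))"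
    by (simp add: algebra_simps)
  also have "\<dots> \<le> real j * a j"
    using rec[OF less.prems] mult_left_mono[OF sum_ge, of "1 - eps"] eps by linarith
  finally show ?case
    using less by simp
qed

lemma rate_le_of_recurrence:
  fixes a :: "nat \<Rightarrow> real"
  assumes n: "1 \<le> n" and eps: "0 \<le> eps" "eps \<le> 1" and a_n: "a n \<le> 1"
    and rec: "\<And>j. 1 \<le> j \<Longrightarrow> j \<le> n \<Longrightarrow> real j * c + (1 - eps) * (\<Sum>i\<in>{1..<j}. a i) \<le> real j * a j"
  shows "c \<le> 1 / harm n + eps"
proof (cases "c \<le> 0")
  case True
  moreover have "0 < 1 / (harm n :: real)"
    using n by simp
  ultimately show ?thesis
    using eps by linarith
next
  case False
  define H :: real where "H = harm n"
  have H: "0 < H"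
    using n by (simp add: H_def)
  define tau where "tau = c / (1 + eps * H)"
  have "0 < 1 + eps * H"
    using H eps by (simp add: add_pos_nonneg)
  then have c_eq: "c = tau * (1 + eps * H)"
    unfolding tau_def by simp
  have tau: "0 \<le> tau"
    using False \<open>0 < 1 + eps * H\<close> by (simp add: tau_def)
  have "tau * H \<le> a n"
    unfolding H_def
  proof (rule harm_le_of_recurrence[OF eps tau _ n order.refl])
    fix j :: nat
    assume "1 \<le> j" "j \<le> n"
    then show "real j * tau * (1 + eps * harm n) + (1 - eps) * (\<Sum>i\<in>{1..<j}. a i) \<le> real j * a j"
      using rec[of j] by (simp add: c_eq H_def mult.assoc)
  qed
  then have "tau \<le> 1 / H"
    using a_n H by (simp add: field_simps)
  then have "c \<le> 1 / H * (1 + eps * H)"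
    unfolding c_eq using H eps by (intro mult_right_mono) auto
  also have "\<dots> = 1 / H + eps"
    using H by (simp add: field_simps)
  finally show ?thesis
    by (simp add: H_def)
qed

definition trade_prob :: "nat \<Rightarrow> (nat \<Rightarrow> real) \<Rightarrow> real" where
  "trade_prob M q = (\<Sum>k=1..M. q k)"

definition mean_option :: "nat \<Rightarrow> (nat \<Rightarrow> real) \<Rightarrow> real" where
  "mean_option M q = (\<Sum>k=1..M. real k * q k)"

definition overshoot :: "nat \<Rightarrow> nat \<Rightarrow> (nat \<Rightarrow> real) \<Rightarrow> real" where
  "overshoot M j q = (\<Sum>k=1..M. max 0 (real k - real j) * q k)"

lemma trade_prob_le_1:
  assumes "\<forall>k\<in>{0..M}. 0 \<le> q k" "(\<Sum>k=0..M. q k) = 1"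
  shows "trade_prob M q \<le> 1"
proof -
  have "(\<Sum>k=0..M. q k) = q 0 + trade_prob M q"
    unfolding trade_prob_def by (simp add: sum.atLeast_Suc_atMost)
  moreover have "0 \<le> q 0"
    using assms(1) by simp
  ultimately show ?thesis
    using assms(2) by simp
qed

lemma overshoot_nonneg: "\<forall>k\<in>{1..M}. 0 \<le> q k \<Longrightarrow> 0 \<le> overshoot M j q"
  unfolding overshoot_def by (intro sum_nonneg) auto

lemma overshoot_antimono:
  assumes "\<forall>k\<in>{1..M}. 0 \<le> q k" "i \<le> j"
  shows "overshoot M j q \<le> overshoot M i q"
  unfolding overshoot_def using assms by (intro sum_mono mult_right_mono) auto

lemma mean_option_le:
  assumes "\<forall>k\<in>{1..M}. 0 \<le> q k"
  shows "mean_option M q \<le> real j * trade_prob M q + overshoot M j q"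
proof -
  have "mean_option M q \<le> (\<Sum>k=1..M. (real j + max 0 (real k - real j)) * q k)"
    unfolding mean_option_def using assms by (intro sum_mono mult_right_mono) auto
  also have "\<dots> = real j * trade_prob M q + overshoot M j q"
    unfolding trade_prob_def overshoot_def
    by (simp add: distrib_right sum.distrib sum_distrib_left)
  finally show ?thesis .
qed

definition seller_vec :: "nat \<Rightarrow> nat \<Rightarrow> real" where
  "seller_vec M k = (if k = 0 \<or> M < k then 0 else real k)"

definition buyer_vec :: "nat \<Rightarrow> real \<Rightarrow> real \<Rightarrow> nat \<Rightarrow> nat \<Rightarrow> real" where
  "buyer_vec M eps d j k =
     (if k = 0 \<or> M < k then 0 else eps * (real j - real k) - d * max 0 (real k - real j))"

lemma submodular_seller_vec: "submodular_vec M (seller_vec M)"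
  unfolding submodular_vec_def seller_vec_def by auto

lemma submodular_buyer_vec:
  assumes "0 \<le> eps" "0 \<le> d" "1 \<le> j"
  shows "submodular_vec M (buyer_vec M eps d j)"
  unfolding submodular_vec_def
proof (intro conjI ballI allI impI)
  fix i
  assume "i \<in> {1..M-1}"
  then have i: "1 \<le> i" "i + 1 \<le> M"
    by auto
  have "j < i \<or> j = i \<or> j = i + 1 \<or> i + 1 < j"
    by arith
  then show "buyer_vec M eps d j (i + 1) - buyer_vec M eps d j i
      \<le> buyer_vec M eps d j i - buyer_vec M eps d j (i - 1)"
    using i assms by (auto simp: buyer_vec_def max_def algebra_simps)
qed (auto simp: buyer_vec_def)

lemma Feasible_buyer_seller_vec:
  assumes "0 < eps" "0 \<le> d" "j \<le> M"
  shows "Feasible M (buyer_vec M eps d j) (seller_vec M) = {0..j}"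
proof -
  have "buyer_vec M eps d j k < 0" if "j < k" "k \<le> M" for k
  proof -
    have "eps * (real j - real k) < 0"
      using assms that by (simp add: mult_pos_neg)
    moreover have "0 \<le> d * max 0 (real k - real j)"
      using assms by simp
    ultimately show ?thesis
      using that unfolding buyer_vec_def by auto
  qed
  moreover have "0 \<le> buyer_vec M eps d j k" if "k \<le> j" for k
    using assms that by (simp add: buyer_vec_def)
  moreover have "0 \<le> seller_vec M k" for k
    by (simp add: seller_vec_def)
  ultimately show ?thesis
    using assms unfolding Feasible_def by auto (meson not_le)
qed

lemma OPT_buyer_seller_vec:
  assumes "0 < eps" "eps \<le> 1" "0 \<le> d" "1 \<le> j" "j \<le> M"
  shows "OPT M (buyer_vec M eps d j) (seller_vec M) = real j"
  unfolding OPT_def Feasible_buyer_seller_vec[OF assms(1,3,5)]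
proof (rule Max_eqI)
  fix y
  assume "y \<in> (\<lambda>i. buyer_vec M eps d j i + seller_vec M i) ` {0..j}"
  then obtain k where k: "k \<le> j" "y = buyer_vec M eps d j k + seller_vec M k"
    by auto
  have "eps * (real j - real k) \<le> 1 * (real j - real k)"
    using k assms by (intro mult_right_mono) auto
  then show "y \<le> real j"
    using k assms unfolding buyer_vec_def seller_vec_def by auto
next
  show "real j \<in> (\<lambda>i. buyer_vec M eps d j i + seller_vec M i) ` {0..j}"
    using assms by (intro image_eqI[of _ _ j]) (auto simp: buyer_vec_def seller_vec_def)
qed simp

lemma utility_buyer_vec:
  "(\<Sum>k=1..M. q k * buyer_vec M eps d j k) =
     eps * (real j * trade_prob M q - mean_option M q) - d * overshoot M j q"
proof -
  have "(\<Sum>k=1..M. q k * buyer_vec M eps d j k) =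
      (\<Sum>k=1..M. eps * real j * q k - eps * (real k * q k) - d * (max 0 (real k - real j) * q k))"
    by (rule sum.cong) (auto simp: buyer_vec_def algebra_simps)
  also have "\<dots> = eps * real j * trade_prob M q - eps * mean_option M q - d * overshoot M j q"
    unfolding trade_prob_def mean_option_def overshoot_def
    by (simp add: sum_subtractf sum_distrib_left)
  finally show ?thesis
    by (simp add: algebra_simps)
qed

lemma gain_buyer_seller_vec:
  fixes M j :: nat and eps d :: real and r :: mechanism
  defines "q \<equiv> r (buyer_vec M eps d j) (seller_vec M)"
  shows "gain M r (buyer_vec M eps d j) (seller_vec M) =
     eps * (real j * trade_prob M q - mean_option M q) - d * overshoot M j q + mean_option M q"
proof -
  have "gain M r (buyer_vec M eps d j) (seller_vec M) =
      (\<Sum>k=1..M. q k * buyer_vec M eps d j k) + mean_option M q"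
    unfolding gain_def mean_option_def q_def sum.distrib[symmetric]
    by (rule sum.cong) (auto simp: seller_vec_def algebra_simps)
  then show ?thesis
    unfolding utility_buyer_vec .
qed

lemma competitive_ratio_le_ratio:
  assumes "submodular_vec M b" "submodular_vec M s" "0 < OPT M b s"
  shows "competitive_ratio M r \<le> ereal (gain M r b s / OPT M b s)"
  unfolding competitive_ratio_def using assms by (intro INF_lower2[of "(b, s)"]) auto

locale hard_instance =
  fixes M :: nat and r :: mechanism and eps eta :: real
  assumes M_pos: "1 \<le> M" and mechanism: "is_mechanism M r" and dsic: "DSIC M r"
    and eps_pos: "0 < eps" and eps_le_1: "eps \<le> 1" and eta_pos: "0 < eta"
begin

definition penalty_base :: real where
  "penalty_base = max 2 (2 * real M / (eps * eta))"

definition penalty :: "nat \<Rightarrow> real" where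
  "penalty j = penalty_base ^ (M + 1 - j) + 1"

definition outcome :: "nat \<Rightarrow> nat \<Rightarrow> real" where
  "outcome j = r (buyer_vec M eps (penalty j) j) (seller_vec M)"

abbreviation "trade j \<equiv> trade_prob M (outcome j)"
abbreviation "mean j \<equiv> mean_option M (outcome j)"
abbreviation "excess j \<equiv> overshoot M j (outcome j)"

lemma penalty_ge_2: "2 \<le> penalty j"
proof -
  have "1 \<le> penalty_base ^ (M + 1 - j)"
    by (rule one_le_power) (simp add: penalty_base_def)
  then show ?thesis
    by (simp add: penalty_def)
qed

lemma penalty_base_large: "2 * real M \<le> eps * eta * penalty_base"
proof -
  have "2 * real M / (eps * eta) \<le> penalty_base"
    by (simp add: penalty_base_def)
  then show ?thesis
    using eps_pos eta_pos by (simp add: field_simps)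
qed

lemma penalty_first: "real M \<le> eta * (penalty 1 - 1)"
proof -
  have "real M \<le> eps * (eta * penalty_base)"
    using penalty_base_large by (simp add: mult.assoc)
  also have "\<dots> \<le> eta * penalty_base"
    using eps_pos eps_le_1 eta_pos by (intro mult_left_le_one_le) (auto simp: penalty_base_def)
  also have "\<dots> \<le> eta * penalty_base ^ M"
    using M_pos eta_pos by (intro mult_left_mono self_le_power) (auto simp: penalty_base_def)
  finally show ?thesis
    by (simp add: penalty_def)
qed

lemma penalty_step:
  assumes "Suc j \<le> M"
  shows "penalty (Suc j) * real M \<le> eta * eps * (penalty j - 1)"
proof -
  define P where "P = penalty_base ^ (M + 1 - Suc j)"
  have P: "1 \<le> P"
    unfolding P_def by (rule one_le_power) (simp add: penalty_base_def)
  have "penalty j - 1 = penalty_base * P"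
    using assms by (simp add: penalty_def P_def Suc_diff_le)
  moreover have "penalty (Suc j) * real M = (P + 1) * real M"
    by (simp add: penalty_def P_def)
  moreover have "(P + 1) * real M \<le> 2 * real M * P"
    using mult_right_mono[OF P, of "real M"] by (simp add: algebra_simps)
  moreover have "2 * real M * P \<le> eps * eta * penalty_base * P"
    using penalty_base_large P by (intro mult_right_mono) auto
  ultimately show ?thesis
    by (simp add: algebra_simps)
qed

lemma submodular_buyer: "1 \<le> j \<Longrightarrow> submodular_vec M (buyer_vec M eps (penalty j) j)"
  using eps_pos penalty_ge_2[of j] by (intro submodular_buyer_vec) auto

lemma outcome_probability:
  assumes "1 \<le> j"
  shows "\<forall>k\<in>{0..M}. 0 \<le> outcome j k" "(\<Sum>k=0..M. outcome j k) = 1"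
  using mechanism submodular_buyer[OF assms] submodular_seller_vec
  unfolding is_mechanism_def outcome_def by auto

lemma outcome_nonneg: "1 \<le> j \<Longrightarrow> \<forall>k\<in>{1..M}. 0 \<le> outcome j k"
  using outcome_probability(1) by auto

lemma trade_le_1: "1 \<le> j \<Longrightarrow> trade j \<le> 1"
  using outcome_probability by (rule trade_prob_le_1)

lemma mean_le: "1 \<le> j \<Longrightarrow> mean j \<le> real j * trade j + excess j"
  using outcome_nonneg by (rule mean_option_le)

lemma excess_nonneg: "1 \<le> j \<Longrightarrow> 0 \<le> excess j"
  using outcome_nonneg by (rule overshoot_nonneg)

lemma truthful_step:
  assumes "1 \<le> j" "Suc j \<le> M"
  shows "eps * (real (Suc j) * trade j - mean j) - penalty (Suc j) * excess j
    \<le> eps * (real (Suc j) * trade (Suc j) - mean (Suc j)) - penalty (Suc j) * excess (Suc j)"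
proof -
  have "(\<Sum>k=1..M. outcome j k * buyer_vec M eps (penalty (Suc j)) (Suc j) k)
      \<le> (\<Sum>k=1..M. outcome (Suc j) k * buyer_vec M eps (penalty (Suc j)) (Suc j) k)"
    using dsic submodular_buyer[of j] submodular_buyer[of "Suc j"] submodular_seller_vec assms
    unfolding DSIC_def outcome_def by (auto simp: mult.commute)
  moreover have "overshoot M (Suc j) (outcome j) \<le> excess j"
    using outcome_nonneg[OF assms(1)] by (rule overshoot_antimono) simp
  then have "penalty (Suc j) * overshoot M (Suc j) (outcome j) \<le> penalty (Suc j) * excess j"
    using penalty_ge_2[of "Suc j"] by (intro mult_left_mono) auto
  ultimately show ?thesis
    unfolding utility_buyer_vec by linarith
qed

context
  fixes t :: real
  assumes t_nonneg: "0 \<le> t" and t_le_ratio: "ereal t \<le> competitive_ratio M r"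
begin

lemma gain_bound:
  assumes "1 \<le> j" "j \<le> M"
  shows "t * real j \<le> eps * (real j * trade j - mean j) - penalty j * excess j + mean j"
proof -
  let ?b = "buyer_vec M eps (penalty j) j"
  have opt: "OPT M ?b (seller_vec M) = real j"
    using assms eps_pos eps_le_1 penalty_ge_2[of j] by (intro OPT_buyer_seller_vec) auto
  have "competitive_ratio M r \<le> ereal (gain M r ?b (seller_vec M) / OPT M ?b (seller_vec M))"
    using assms opt by (intro competitive_ratio_le_ratio submodular_buyer submodular_seller_vec) auto
  then have "ereal t \<le> ereal (gain M r ?b (seller_vec M) / real j)"
    using t_le_ratio opt by (metis order.trans)
  then have "t * real j \<le> gain M r ?b (seller_vec M)"
    using assms by (simp add: field_simps)
  then show ?thesis
    unfolding gain_buyer_seller_vec outcome_def .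
qed

lemma excess_bound:
  assumes "1 \<le> j" "j \<le> M"
  shows "excess j * (penalty j - 1) \<le> real M"
proof -
  have "(1 - eps) * mean j \<le> (1 - eps) * (real j * trade j + excess j)"
    using mean_le[OF assms(1)] eps_le_1 by (intro mult_left_mono) auto
  moreover have "real j * trade j \<le> real j"
    using trade_le_1[OF assms(1)] by (simp add: mult_left_le)
  moreover have "0 \<le> eps * excess j"
    using excess_nonneg[OF assms(1)] eps_pos by simp
  moreover have "0 \<le> t * real j"
    using t_nonneg by simp
  ultimately show ?thesis
    using gain_bound[OF assms] assms(2) by (simp add: algebra_simps)
qed

lemma excess_first: "excess 1 \<le> eta"
proof -
  have "excess 1 * (penalty 1 - 1) \<le> eta * (penalty 1 - 1)"
    using excess_bound[of 1] penalty_first M_pos by simp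
  moreover have "0 < penalty 1 - 1"
    using penalty_ge_2[of 1] by simp
  ultimately show ?thesis
    by simp
qed

lemma penalty_times_excess:
  assumes "1 \<le> j" "Suc j \<le> M"
  shows "penalty (Suc j) * excess j \<le> eta * eps"
proof -
  have "penalty (Suc j) * excess j * (penalty j - 1) = penalty (Suc j) * (excess j * (penalty j - 1))"
    by simp
  also have "\<dots> \<le> penalty (Suc j) * real M"
    using excess_bound[of j] assms penalty_ge_2[of "Suc j"] by (intro mult_left_mono) auto
  also have "\<dots> \<le> eta * eps * (penalty j - 1)"
    using penalty_step[OF assms(2)] .
  finally show ?thesis
    using penalty_ge_2[of j] by simp
qed

lemma potential_step:
  assumes "1 \<le> j" "Suc j \<le> M"
  shows "real j * trade j - mean j + trade j - eta \<le> real (Suc j) * trade (Suc j) - mean (Suc j)"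
proof -
  have "0 \<le> penalty (Suc j) * excess (Suc j)"
    using penalty_ge_2[of "Suc j"] excess_nonneg[of "Suc j"] by simp
  then have "eps * (real j * trade j - mean j + trade j - eta)
      \<le> eps * (real (Suc j) * trade (Suc j) - mean (Suc j))"
    using truthful_step[OF assms] penalty_times_excess[OF assms] by (simp add: algebra_simps)
  then show ?thesis
    using eps_pos by simp
qed

lemma potential_lower_bound:
  assumes "1 \<le> j" "j \<le> M"
  shows "(\<Sum>i\<in>{1..<j}. trade i) - real j * eta \<le> real j * trade j - mean j"
  using assms
proof (induction j rule: dec_induct)
  case base
  then show ?case
    using mean_le[of 1] excess_first by simp
next
  case (step n)
  then show ?case
    using potential_step[of n] by (simp add: algebra_simps)
qed

lemma rate_recurrence:
  assumes "1 \<le> j" "j \<le> M"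
  shows "real j * (t - eta) + (1 - eps) * (\<Sum>i\<in>{1..<j}. trade i) \<le> real j * trade j"
proof -
  have "(1 - eps) * ((\<Sum>i\<in>{1..<j}. trade i) - real j * eta)
      \<le> (1 - eps) * (real j * trade j - mean j)"
    using potential_lower_bound[OF assms] eps_le_1 by (intro mult_left_mono) auto
  moreover have "0 \<le> penalty j * excess j"
    using penalty_ge_2[of j] excess_nonneg[of j] assms by simp
  moreover have "0 \<le> eps * (real j * eta)"
    using eps_pos eta_pos by simp
  ultimately show ?thesis
    using gain_bound[OF assms] by (simp add: algebra_simps)
qed

lemma ratio_bound: "t \<le> 1 / harm M + eta + eps"
proof -
  have "t - eta \<le> 1 / harm M + eps"
    by (rule rate_le_of_recurrence[where a = trade])
       (use M_pos eps_pos eps_le_1 trade_le_1 rate_recurrence in auto)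
  then show ?thesis
    by simp
qed

end

lemma competitive_ratio_bound: "competitive_ratio M r \<le> ereal (1 / harm M + eta + eps)"
proof (rule dense_le)
  fix x
  assume "x < competitive_ratio M r"
  then show "x \<le> ereal (1 / harm M + eta + eps)"
  proof (cases x)
    case (real t)
    show ?thesis
    proof (cases "0 \<le> t")
      case True
      then show ?thesis
        using ratio_bound[of t] real \<open>x < competitive_ratio M r\<close> by simp
    next
      case False
      moreover have "0 < 1 / (harm M :: real)"
        using M_pos by simp
      ultimately have "t \<le> 1 / harm M + eta + eps"
        using eta_pos eps_pos by linarith
      then show ?thesis
        using real by simp
    qed
  qed simp_all
qed

end

theorem theorem2:
  fixes M :: nat and r :: mechanism
  assumes "M \<ge> 1" and "is_mechanism M r" and "DSIC M r"
  shows "competitive_ratio M r \<le> ereal (1 / harm M)"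
proof (rule ereal_le_epsilon2)
  fix e :: real
  assume "0 < e"
  define \<delta> where "\<delta> = min 1 (e / 2)"
  interpret hard_instance M r \<delta> \<delta>
    using assms \<open>0 < e\<close> by unfold_locales (auto simp: \<delta>_def)
  have "competitive_ratio M r \<le> ereal (1 / harm M + \<delta> + \<delta>)"
    by (rule competitive_ratio_bound)
  also have "\<dots> \<le> ereal (1 / harm M) + ereal e"
    by (simp add: \<delta>_def)
  finally show "competitive_ratio M r \<le> ereal (1 / harm M) + ereal e" .
qed

end
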